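(* Let $M\ge 2$, $\sigma>0$, and let $f$ be the single-epoch DP-SGD random-shuffling trade-off function (defined in the context). Let $$\mu=\sqrt{\frac{e^{1/\sigma^2}-1}{M-1}},\qquad K_\sigma=e^{1/\sigma^2}\cdot\frac{1+4e^{-3/\sigma^2}}{(1-e^{-1/\sigma^2})^{2}}.$$ Let $\delta>0$ satisfy $$\delta\;\ge\;2B K_\sigma\,\mu+\frac{\mu}{\sqrt{2\pi}}+\left\{\frac{1}{4\sqrt{2\pi}}+\frac{1}{2\sqrt{2e\pi}}\Big(1+\frac{e^{1/\sigma^2}}{1-e^{-1/\sigma^2}}\Big)\right\}\mu^2+\frac{\mu^3}{4\sqrt{2e\pi}}+\frac{\mu^4}{32\sqrt{2e\pi}}+\frac{4.52}{2.88\sqrt{\ln M}-2.41/\sqrt{\ln M}}\,M^{-25/24},$$ and also $$\delta+BK_\sigma\,\mu\;\le\;\frac12-\Phi\!\Big(-\frac{e^{1/\sigma^2}-1}{2}\Big).$$ Then for all $a\in[0,1]$, $f(a)\ge 1-a-\delta$, and for every integer $E\ge1$, $f^{\otimes E}(a)\ge (1-\delta)^E-a$.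
   Context: Fix a noise multiplier $\sigma>0$ and an integer $M\ge2$. Write $\mathrm{n}(x)=e^{-x^2/2}/\sqrt{2\pi}$ and $\Phi(x)=\int_{-\infty}^x\mathrm{n}(t)\,dt$. Let $P_0$ be the law on $\mathbb R^M$ of $(X_1,\dots,X_M)$ with i.i.d. $N(0,1)$ coordinates, and $P_1$ the law obtained by drawing $J$ uniformly from $\{1,\dots,M\}$ and then, independently, $X_J\sim N(1/\sigma,1)$ and $X_i\sim N(0,1)$ for $i\neq J$, all independent. For a (randomized) rejection rule $\phi:\mathbb R^M\to[0,1]$ let $\alpha(\phi)=\mathbb E_{P_0}[\phi]$, $\beta(\phi)=1-\mathbb E_{P_1}[\phi]$. For distributions $P,Q$ the trade-off function is $T(P,Q)(a)=\inf\{\beta(\phi):\alpha(\phi)\le a\}$, $a\in[0,1]$. The single-epoch DP-SGD random-shuffling trade-off function with $M$ rounds and noise multiplier $\sigma$ is $f=T(P_0,P_1)$. For trade-off functions $f=T(P,Q)$, $g=T(P',Q')$, the composition is $f\otimes g=T(P\times P',Q\times Q')$, and $f^{\otimes E}$ denotes the $E$-fold composition. $B$ denotes the universal Berry–Esseen constant for i.i.d. sums: a constant such that for every i.i.d. sequence $Z_1,Z_2,\dots$ with finite third moment, variance $s^2>0$ and $r^3=\mathbb E|Z_1-\mathbb EZ_1|^3$, the distribution function $F_n$ of $\sum_{j\le n}(Z_j-\mathbb EZ_j)/(s\sqrt n)$ satisfies $\sup_x|F_n(x)-\Phi(x)|\le B r^3/(\sqrt n s^3)$ (one may take $B=0.4748$;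 it is known that $B\in[0.4097,0.4748]$). *)

theory Defs
  imports "HOL-Probability.Probability"
begin

definition Phi :: "real \<Rightarrow> real" where
  "Phi x = measure (density lborel std_normal_density) {..x}"

definition gauss :: "real \<Rightarrow> real measure" where
  "gauss m = density lborel (normal_density m 1)"

definition P0 :: "nat \<Rightarrow> (nat \<Rightarrow> real) measure" where
  "P0 M = PiM {..<M} (\<lambda>_. gauss 0)"

definition P1 :: "nat \<Rightarrow> real \<Rightarrow> (nat \<Rightarrow> real) measure" where
  "P1 M \<sigma> = bind (uniform_count_measure {..<M})
     (\<lambda>j. PiM {..<M} (\<lambda>i. if i = j then gauss (1/\<sigma>) else gauss 0))"

text \<open>Trade-off function T(P,Q)(a): infimum of type II errors over
  (randomized) rejection rules phi with values in [0,1] and type I error at most a.\<close>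
definition tradeoff :: "'a measure \<Rightarrow> 'a measure \<Rightarrow> real \<Rightarrow> real" where
  "tradeoff P Q a = Inf {1 - integral\<^sup>L Q \<phi> | \<phi>.
      \<phi> \<in> borel_measurable P \<and> (\<forall>x \<in> space P. 0 \<le> \<phi> x \<and> \<phi> x \<le> 1) \<and>
      integral\<^sup>L P \<phi> \<le> a}"

definition shuffle_tradeoff :: "nat \<Rightarrow> real \<Rightarrow> real \<Rightarrow> real" where
  "shuffle_tradeoff M \<sigma> = tradeoff (P0 M) (P1 M \<sigma>)"

text \<open>E-fold composition f^{\<otimes>E} = T(P0^E, P1^E).\<close>
definition shuffle_tradeoff_comp :: "nat \<Rightarrow> nat \<Rightarrow> real \<Rightarrow> real \<Rightarrow> real" where
  "shuffle_tradeoff_comp E M \<sigma> =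
     tradeoff (PiM {..<E} (\<lambda>_. P0 M)) (PiM {..<E} (\<lambda>_. P1 M \<sigma>))"

text \<open>B is a valid Berry-Esseen constant for i.i.d. sums.  An i.i.d. sequence with
  common law nu is represented by the product measure of n copies of nu.\<close>
definition berry_esseen_const :: "real \<Rightarrow> bool" where
  "berry_esseen_const B \<longleftrightarrow>
    (\<forall>(\<nu>::real measure) (n::nat).
       prob_space \<nu> \<and> sets \<nu> = sets borel \<and> integrable \<nu> (\<lambda>z. \<bar>z\<bar> ^ 3) \<and> n \<ge> 1 \<and>
       (let m = integral\<^sup>L \<nu> (\<lambda>z. z) in integral\<^sup>L \<nu> (\<lambda>z. (z - m)\<^sup>2) > 0) \<longrightarrow>
       (let m = integral\<^sup>L \<nu> (\<lambda>z. z);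
            s = sqrt (integral\<^sup>L \<nu> (\<lambda>z. (z - m)\<^sup>2));
            r3 = integral\<^sup>L \<nu> (\<lambda>z. \<bar>z - m\<bar> ^ 3)
        in \<forall>x. \<bar>measure (PiM {..<n} (\<lambda>_. \<nu>))
                  {\<omega> \<in> space (PiM {..<n} (\<lambda>_. \<nu>)).
                     (\<Sum>i<n. \<omega> i - m) / (s * sqrt (real n)) \<le> x} - Phi x\<bar>
               \<le> B * r3 / (sqrt (real n) * s ^ 3)))"

end

theory Submission
  imports Defs
begin

text \<open>
  With \<open>s = 1/\<sigma>\<close>, the likelihood ratio of \<open>P1\<close> with respect to \<open>P0\<close> is the average
  \<open>g x = (\<Sum>j<M. exp (s * x j - s\<^sup>2/2)) / M\<close>, whose second moment under \<open>P0\<close> is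
  \<open>1 + (exp (s\<^sup>2) - 1) / M \<le> 1 + \<mu>\<^sup>2\<close>.  Every test has type II error at least
  \<open>E\<^sub>P\<^sub>0[min g 1] - \<alpha>\<close>, and the pointwise bound \<open>min g 1 \<ge> 1 - \<mu>/2 - (g - 1)\<^sup>2/(2\<mu>)\<close>
  gives \<open>E\<^sub>P\<^sub>0[min g 1] \<ge> 1 - \<mu>\<close>.  Under composition the likelihood ratio is a product
  of independent copies of \<open>g\<close>, which yields \<open>(1 - \<mu>)^E - \<alpha>\<close>.

  It remains to see that the hypotheses force \<open>\<mu> \<le> \<delta> \<le> 1/2\<close>.  Testing the
  Berry-Esseen inequality with \<open>n = 1\<close> on two-point laws shows \<open>B \<ge> 1/8\<close>, and
  \<open>K\<^sub>\<sigma> \<ge> 4\<close>, so \<open>2 B K\<^sub>\<sigma> \<mu> \<ge> \<mu>\<close>.  For \<open>M = 2\<close> one has \<open>B K\<^sub>\<sigma> \<mu> \<ge> 1\<close>, which the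
  upper hypothesis excludes; for \<open>M \<ge> 3\<close> the last term of the lower hypothesis is
  nonnegative.
\<close>

section \<open>Likelihood ratios and trade-off functions\<close>

lemma prob_space_density_iff:
  assumes [measurable]: "G \<in> borel_measurable P" and G_nonneg: "\<And>x. x \<in> space P \<Longrightarrow> 0 \<le> G x"
  shows "prob_space (density P (\<lambda>x. ennreal (G x))) \<longleftrightarrow> integrable P G \<and> integral\<^sup>L P G = 1"
proof -
  have space: "emeasure (density P (\<lambda>x. ennreal (G x))) (space P) = (\<integral>\<^sup>+x. ennreal (G x) \<partial>P)"
    by (simp add: emeasure_density nn_integral_density cong: nn_integral_cong)
  show ?thesis
  proof
    assume "prob_space (density P (\<lambda>x. ennreal (G x)))"
    then have nn: "(\<integral>\<^sup>+x. ennreal (G x) \<partial>P) = 1"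
      using space prob_space.emeasure_space_1 by fastforce
    then have "integrable P G"
      using G_nonneg by (intro integrableI_nonneg) (auto intro!: AE_I2)
    moreover have "ennreal (integral\<^sup>L P G) = 1"
      using calculation G_nonneg nn by (subst nn_integral_eq_integral[symmetric]) (auto intro!: AE_I2)
    ultimately show "integrable P G \<and> integral\<^sup>L P G = 1" by simp
  next
    assume "integrable P G \<and> integral\<^sup>L P G = 1"
    then have "(\<integral>\<^sup>+x. ennreal (G x) \<partial>P) = 1"
      using G_nonneg by (subst nn_integral_eq_integral) (auto intro!: AE_I2)
    then show "prob_space (density P (\<lambda>x. ennreal (G x)))"
      using space by (intro prob_spaceI) simp
  qed
qed

lemma PiM_density:
  fixes N :: "'i \<Rightarrow> 'a measure" and f :: "'i \<Rightarrow> 'a \<Rightarrow> ennreal"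
  assumes "finite I" and N: "\<And>i. prob_space (N i)"
    and f_meas: "\<And>i. f i \<in> borel_measurable (N i)"
    and density_prob: "\<And>i. prob_space (density (N i) (f i))"
  shows "PiM I (\<lambda>i. density (N i) (f i)) = density (PiM I N) (\<lambda>x. \<Prod>i\<in>I. f i (x i))"
proof -
  interpret D: product_prob_space "\<lambda>i. density (N i) (f i)" by (rule product_prob_spaceI[OF density_prob])
  interpret NN: product_prob_space N by (rule product_prob_spaceI[OF N])
  have prod_meas: "(\<lambda>x. \<Prod>i\<in>I. f i (x i)) \<in> borel_measurable (PiM I N)"
    using f_meas by (intro borel_measurable_prod_ennreal)
      (auto intro: measurable_compose[OF measurable_component_singleton])
  show ?thesis
  proof (rule D.PiM_eqI[symmetric])
    show "finite I" by fact
    show "sets (density (PiM I N) (\<lambda>x. \<Prod>i\<in>I. f i (x i))) = sets (PiM I (\<lambda>i. density (N i) (f i)))"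
      by (subst sets_density) (rule sets_PiM_cong, auto)
  next
    fix A assume "\<And>i. i \<in> I \<Longrightarrow> A i \<in> sets (density (N i) (f i))"
    then have A: "\<And>i. i \<in> I \<Longrightarrow> A i \<in> sets (N i)" by simp
    have "emeasure (density (PiM I N) (\<lambda>x. \<Prod>i\<in>I. f i (x i))) (Pi\<^sub>E I A)
        = (\<integral>\<^sup>+x. (\<Prod>i\<in>I. f i (x i)) * indicator (Pi\<^sub>E I A) x \<partial>PiM I N)"
      using A \<open>finite I\<close> prod_meas by (intro emeasure_density) (auto intro: sets_PiM_I_finite)
    also have "\<dots> = (\<integral>\<^sup>+x. (\<Prod>i\<in>I. f i (x i) * indicator (A i) (x i)) \<partial>PiM I N)"
    proof (rule nn_integral_cong)
      fix x assume "x \<in> space (PiM I N)"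
      then have "x \<in> extensional I" by (auto simp: space_PiM PiE_def)
      then show "(\<Prod>i\<in>I. f i (x i)) * indicator (Pi\<^sub>E I A) x = (\<Prod>i\<in>I. f i (x i) * indicator (A i) (x i))"
        using \<open>finite I\<close> by (auto simp: prod.distrib indicator_def PiE_iff)
    qed
    also have "\<dots> = (\<Prod>i\<in>I. \<integral>\<^sup>+y. f i y * indicator (A i) y \<partial>N i)"
      using A f_meas \<open>finite I\<close> by (intro NN.product_nn_integral_prod) auto
    also have "\<dots> = (\<Prod>i\<in>I. emeasure (density (N i) (f i)) (A i))"
      using A f_meas by (intro prod.cong refl) (simp add: emeasure_density)
    finally show "emeasure (density (PiM I N) (\<lambda>x. \<Prod>i\<in>I. f i (x i))) (Pi\<^sub>E I A)
        = (\<Prod>i\<in>I. emeasure (density (N i) (f i)) (A i))" .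
  qed
qed

lemma integral_PiM_component_mult:
  fixes f h :: "'a \<Rightarrow> real"
  assumes N: "\<And>i. prob_space (N i)" and "finite I" "j \<in> I" "k \<in> I"
    and f: "integrable (N j) f" and h: "integrable (N k) h"
    and fh: "j = k \<Longrightarrow> integrable (N j) (\<lambda>y. f y * h y)"
  shows "integrable (PiM I N) (\<lambda>x. f (x j) * h (x k))"
    and "integral\<^sup>L (PiM I N) (\<lambda>x. f (x j) * h (x k)) =
      (if j = k then integral\<^sup>L (N j) (\<lambda>y. f y * h y) else integral\<^sup>L (N j) f * integral\<^sup>L (N k) h)"
proof -
  interpret product_prob_space N by (rule product_prob_spaceI[OF N])
  define F where "F i y = (if i = j then f y else 1) * (if i = k then h y else 1)" for i y
  have const_int: "integrable (N i) (\<lambda>_. c)" for i and c :: real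
    using N finite_measure.integrable_const prob_space_def by blast
  have F_int: "integrable (N i) (F i)" for i
    using f h fh const_int by (cases "i = j"; cases "i = k") (simp_all add: F_def[abs_def])
  have F_prod: "(\<lambda>x. \<Prod>i\<in>I. F i (x i)) = (\<lambda>x. f (x j) * h (x k))"
    using assms by (simp add: F_def prod.distrib prod.delta)
  show "integrable (PiM I N) (\<lambda>x. f (x j) * h (x k))"
    using product_integrable_prod[OF \<open>finite I\<close> F_int] unfolding F_prod .
  have "integral\<^sup>L (PiM I N) (\<lambda>x. f (x j) * h (x k)) = (\<Prod>i\<in>I. integral\<^sup>L (N i) (F i))"
    using product_integral_prod[OF \<open>finite I\<close> F_int] unfolding F_prod .
  also have "\<dots> = (if j = k then integral\<^sup>L (N j) (\<lambda>y. f y * h y) else integral\<^sup>L (N j) f * integral\<^sup>L (N k) h)"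
  proof (cases "j = k")
    case True
    have "integral\<^sup>L (N i) (F i) = (if i = j then integral\<^sup>L (N j) (\<lambda>y. f y * h y) else 1)" for i
      using True by (auto simp: F_def[abs_def] prob_space.prob_space[OF N])
    then show ?thesis
      using assms True by (simp add: prod.delta)
  next
    case False
    have "integral\<^sup>L (N i) (F i) =
        (if i = j then integral\<^sup>L (N j) f else 1) * (if i = k then integral\<^sup>L (N k) h else 1)" for i
      using False by (auto simp: F_def[abs_def] prob_space.prob_space[OF N])
    then show ?thesis
      using assms False by (simp add: prod.distrib prod.delta)
  qed
  finally show "integral\<^sup>L (PiM I N) (\<lambda>x. f (x j) * h (x k)) = \<dots>" .
qed

lemma mult_le_add_sub_min_one:
  fixes g p :: real
  assumes "0 \<le> g" "0 \<le> p" "p \<le> 1"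
  shows "g * p \<le> p + (g - min g 1)"
proof (cases "g \<le> 1")
  case True
  then show ?thesis using assms mult_right_mono[of g 1 p] by simp
next
  case False
  then have "(g - 1) * (p - 1) \<le> 0" using assms by (intro mult_nonneg_nonpos) auto
  then show ?thesis using False by (simp add: algebra_simps)
qed

lemma tradeoff_density_ge:
  assumes P: "prob_space P"
    and [measurable]: "G \<in> borel_measurable P" and G_nonneg: "\<And>x. x \<in> space P \<Longrightarrow> 0 \<le> G x"
    and G_int: "integrable P G" and G_1: "integral\<^sup>L P G = 1" and "0 \<le> a"
  shows "integral\<^sup>L P (\<lambda>x. min (G x) 1) - a \<le> tradeoff P (density P (\<lambda>x. ennreal (G x))) a"
  unfolding tradeoff_def
proof (rule cInf_greatest)
  show "{1 - integral\<^sup>L (density P (\<lambda>x. ennreal (G x))) \<phi> | \<phi>. \<phi> \<in> borel_measurable P \<and>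
      (\<forall>x\<in>space P. 0 \<le> \<phi> x \<and> \<phi> x \<le> 1) \<and> integral\<^sup>L P \<phi> \<le> a} \<noteq> {}"
    using \<open>0 \<le> a\<close> by (auto intro!: exI[of _ "\<lambda>_. 0"])
next
  interpret prob_space P by fact
  fix y assume "y \<in> {1 - integral\<^sup>L (density P (\<lambda>x. ennreal (G x))) \<phi> | \<phi>. \<phi> \<in> borel_measurable P \<and>
      (\<forall>x\<in>space P. 0 \<le> \<phi> x \<and> \<phi> x \<le> 1) \<and> integral\<^sup>L P \<phi> \<le> a}"
  then obtain \<phi> where y: "y = 1 - integral\<^sup>L (density P (\<lambda>x. ennreal (G x))) \<phi>"
    and [measurable]: "\<phi> \<in> borel_measurable P" and \<phi>_01: "\<forall>x \<in> space P. 0 \<le> \<phi> x \<and> \<phi> x \<le> 1"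
    and \<phi>_alpha: "integral\<^sup>L P \<phi> \<le> a" by blast
  have \<phi>_int: "integrable P \<phi>"
    using \<phi>_01 by (intro integrable_const_bound[where B=1]) auto
  have G\<phi>_int: "integrable P (\<lambda>x. G x * \<phi> x)"
    using \<phi>_01 G_nonneg
    by (intro Bochner_Integration.integrable_bound[OF G_int]) (auto simp: abs_mult intro: mult_left_le)
  have "integral\<^sup>L (density P (\<lambda>x. ennreal (G x))) \<phi> = integral\<^sup>L P (\<lambda>x. G x * \<phi> x)"
    using G_nonneg by (subst integral_density) auto
  also have "\<dots> \<le> integral\<^sup>L P (\<lambda>x. \<phi> x + (G x - min (G x) 1))"
    using \<phi>_01 G_nonneg \<phi>_int G_int G\<phi>_int by (intro integral_mono mult_le_add_sub_min_one) auto
  also have "\<dots> = integral\<^sup>L P \<phi> + 1 - integral\<^sup>L P (\<lambda>x. min (G x) 1)"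
    using \<phi>_int G_int G_1 by simp
  finally show "integral\<^sup>L P (\<lambda>x. min (G x) 1) - a \<le> y" using y \<phi>_alpha by linarith
qed

lemma min_one_ge_quadratic:
  fixes g \<mu> :: real
  assumes "0 < \<mu>"
  shows "1 - \<mu>/2 - (g - 1)\<^sup>2 / (2 * \<mu>) \<le> min g 1"
proof (cases "g \<le> 1")
  case True
  have "1 - \<mu>/2 - (g - 1)\<^sup>2 / (2 * \<mu>) = g - (1 - g - \<mu>)\<^sup>2 / (2 * \<mu>)"
    using assms by (simp add: field_simps power2_eq_square)
  then show ?thesis using True assms by simp
next
  case False
  have "0 \<le> (g - 1)\<^sup>2 / (2 * \<mu>)" using assms by simp
  moreover have "min g 1 = 1" using False by simp
  ultimately show ?thesis using assms by linarith
qed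

lemma integral_min_one_ge:
  fixes g :: "'a \<Rightarrow> real"
  assumes "prob_space P" "0 < \<mu>"
    and g_int: "integrable P g" and g2_int: "integrable P (\<lambda>x. (g x)\<^sup>2)"
    and g_1: "integral\<^sup>L P g = 1" and g2_le: "integral\<^sup>L P (\<lambda>x. (g x)\<^sup>2) \<le> 1 + \<mu>\<^sup>2"
  shows "1 - \<mu> \<le> integral\<^sup>L P (\<lambda>x. min (g x) 1)"
proof -
  interpret prob_space P by fact
  have sq_int: "integrable P (\<lambda>x. (g x - 1)\<^sup>2)"
    using g_int g2_int by (simp add: power2_diff)
  have sq_integral: "integral\<^sup>L P (\<lambda>x. (g x - 1)\<^sup>2) \<le> \<mu>\<^sup>2"
    using g_int g2_int g_1 g2_le by (simp add: power2_diff prob_space)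
  have "1 - \<mu> \<le> 1 - \<mu>/2 - integral\<^sup>L P (\<lambda>x. (g x - 1)\<^sup>2) / (2 * \<mu>)"
    using sq_integral \<open>0 < \<mu>\<close> by (simp add: field_simps power2_eq_square)
  also have "\<dots> = integral\<^sup>L P (\<lambda>x. 1 - \<mu>/2 - (g x - 1)\<^sup>2 / (2 * \<mu>))"
    using sq_int by (simp add: prob_space)
  also have "\<dots> \<le> integral\<^sup>L P (\<lambda>x. min (g x) 1)"
    using g_int sq_int \<open>0 < \<mu>\<close> by (intro integral_mono min_one_ge_quadratic) auto
  finally show ?thesis .
qed

lemma tradeoff_PiM_density_ge:
  assumes "finite I" and P_prob: "prob_space P"
    and G_meas: "G \<in> borel_measurable P" and G_nonneg: "\<And>x. 0 \<le> G x"
    and G_int: "integrable P G" and G_1: "integral\<^sup>L P G = 1" and "0 \<le> a"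
  shows "(integral\<^sup>L P (\<lambda>x. min (G x) 1)) ^ card I - a
    \<le> tradeoff (PiM I (\<lambda>_. P)) (PiM I (\<lambda>_. density P (\<lambda>x. ennreal (G x)))) a"
proof -
  interpret product_prob_space "\<lambda>_. P" by (rule product_prob_spaceI[OF P_prob])
  let ?G = "\<lambda>\<omega>. \<Prod>i\<in>I. G (\<omega> i)"
  have "PiM I (\<lambda>_. density P (\<lambda>x. ennreal (G x))) = density (PiM I (\<lambda>_. P)) (\<lambda>\<omega>. \<Prod>i\<in>I. ennreal (G (\<omega> i)))"
    using assms prob_space_density_iff[of G P] by (intro PiM_density) auto
  also have "\<dots> = density (PiM I (\<lambda>_. P)) (\<lambda>\<omega>. ennreal (?G \<omega>))"
    using G_nonneg by (simp add: prod_ennreal)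
  finally have PiM_eq: "PiM I (\<lambda>_. density P (\<lambda>x. ennreal (G x))) = \<dots>" .
  have min_int: "integrable P (\<lambda>x. min (G x) 1)" using G_int by auto
  have G_prod_int: "integrable (PiM I (\<lambda>_. P)) ?G"
    using G_int by (intro product_integrable_prod \<open>finite I\<close>)
  have G_prod_1: "integral\<^sup>L (PiM I (\<lambda>_. P)) ?G = 1"
    using G_int G_1 \<open>finite I\<close> by (subst product_integral_prod) auto
  have "(integral\<^sup>L P (\<lambda>x. min (G x) 1)) ^ card I = integral\<^sup>L (PiM I (\<lambda>_. P)) (\<lambda>\<omega>. \<Prod>i\<in>I. min (G (\<omega> i)) 1)"
    using min_int \<open>finite I\<close> by (subst product_integral_prod) auto
  also have "\<dots> \<le> integral\<^sup>L (PiM I (\<lambda>_. P)) (\<lambda>\<omega>. min (?G \<omega>) 1)"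
  proof (rule integral_mono)
    show "integrable (PiM I (\<lambda>_. P)) (\<lambda>\<omega>. \<Prod>i\<in>I. min (G (\<omega> i)) 1)"
      using min_int by (intro product_integrable_prod \<open>finite I\<close>)
    show "integrable (PiM I (\<lambda>_. P)) (\<lambda>\<omega>. min (?G \<omega>) 1)" using G_prod_int by auto
    show "(\<Prod>i\<in>I. min (G (\<omega> i)) 1) \<le> min (?G \<omega>) 1" for \<omega>
      using G_nonneg by (auto intro: prod_mono prod_le_1)
  qed
  also have "\<dots> - a \<le> tradeoff (PiM I (\<lambda>_. P)) (density (PiM I (\<lambda>_. P)) (\<lambda>\<omega>. ennreal (?G \<omega>))) a"
    using G_meas G_nonneg G_prod_int G_prod_1 \<open>0 \<le> a\<close>
    by (intro tradeoff_density_ge prob_space_PiM) (auto simp: P_prob prod_nonneg)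
  finally show ?thesis unfolding PiM_eq by simp
qed

section \<open>Gaussian likelihood ratios\<close>

definition gauss_lr :: "real \<Rightarrow> real \<Rightarrow> real" where
  "gauss_lr s y = exp (s * y - s\<^sup>2 / 2)"

lemma gauss_lr_pos: "0 < gauss_lr s y"
  by (simp add: gauss_lr_def)

lemma gauss_lr_measurable[measurable]: "gauss_lr s \<in> borel_measurable borel"
  unfolding gauss_lr_def[abs_def] by measurable

lemma gauss_lr_mult_self: "gauss_lr s y * gauss_lr s y = exp (s\<^sup>2) * gauss_lr (2 * s) y"
  by (simp add: gauss_lr_def exp_add[symmetric] power2_eq_square algebra_simps)

lemma sets_gauss[measurable_cong, simp]: "sets (gauss m) = sets borel"
  by (simp add: gauss_def)

lemma prob_space_gauss: "prob_space (gauss m)"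
  unfolding gauss_def by (rule prob_space_normal_density) simp

lemma gauss_eq_density_gauss_lr: "gauss s = density (gauss 0) (\<lambda>y. ennreal (gauss_lr s y))"
proof -
  have "normal_density 0 1 y * gauss_lr s y = normal_density s 1 y" for y
    by (simp add: normal_density_def gauss_lr_def exp_add[symmetric] power2_eq_square algebra_simps)
  then have "(\<lambda>y. ennreal (normal_density 0 1 y) * ennreal (gauss_lr s y)) = (\<lambda>y. ennreal (normal_density s 1 y))"
    by (simp add: ennreal_mult'[symmetric] normal_density_nonneg)
  then show ?thesis
    unfolding gauss_def by (subst density_density_eq) auto
qed

lemma gauss_lr_integral:
  "integrable (gauss 0) (gauss_lr s)" "integral\<^sup>L (gauss 0) (gauss_lr s) = 1"
  using prob_space_density_iff[of "gauss_lr s" "gauss 0"] prob_space_gauss[of s]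
  by (auto simp: gauss_eq_density_gauss_lr[symmetric] less_imp_le[OF gauss_lr_pos])

lemma gauss_lr_mult_self_integral:
  "integrable (gauss 0) (\<lambda>y. gauss_lr s y * gauss_lr s y)"
  "integral\<^sup>L (gauss 0) (\<lambda>y. gauss_lr s y * gauss_lr s y) = exp (s\<^sup>2)"
  using gauss_lr_integral[of "2 * s"] by (simp_all add: gauss_lr_mult_self)

section \<open>The shuffled mechanism\<close>

lemma prob_space_P0: "prob_space (P0 M)"
  unfolding P0_def by (intro prob_space_PiM prob_space_gauss)

definition shuffle_lr :: "nat \<Rightarrow> real \<Rightarrow> (nat \<Rightarrow> real) \<Rightarrow> real" where
  "shuffle_lr M s x = (\<Sum>j<M. gauss_lr s (x j)) / real M"

lemma shuffle_lr_nonneg: "0 \<le> shuffle_lr M s x"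
  unfolding shuffle_lr_def by (intro divide_nonneg_nonneg sum_nonneg less_imp_le[OF gauss_lr_pos]) auto

lemma shuffle_lr_measurable[measurable]: "shuffle_lr M s \<in> borel_measurable (P0 M)"
  unfolding shuffle_lr_def[abs_def] P0_def by measurable

lemma PiM_shifted_eq_density:
  assumes "j < M"
  shows "PiM {..<M} (\<lambda>i. if i = j then gauss s else gauss 0) = density (P0 M) (\<lambda>x. ennreal (gauss_lr s (x j)))"
proof -
  define f where "f i = (if i = j then (\<lambda>y. ennreal (gauss_lr s y)) else (\<lambda>_. 1))" for i
  have "PiM {..<M} (\<lambda>i. if i = j then gauss s else gauss 0) = PiM {..<M} (\<lambda>i. density (gauss 0) (f i))"
    by (intro PiM_cong) (auto simp: f_def density_1 gauss_eq_density_gauss_lr[symmetric])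
  also have "\<dots> = density (P0 M) (\<lambda>x. \<Prod>i<M. f i (x i))"
    unfolding P0_def
    by (intro PiM_density) (auto simp: f_def density_1 gauss_eq_density_gauss_lr[symmetric] prob_space_gauss)
  also have "\<dots> = density (P0 M) (\<lambda>x. ennreal (gauss_lr s (x j)))"
    using assms by (simp add: f_def if_distrib[of "\<lambda>g. g _"] prod.delta cong: if_cong)
  finally show ?thesis .
qed

lemma P1_eq_density:
  assumes "1 \<le> M"
  shows "P1 M \<sigma> = density (P0 M) (\<lambda>x. ennreal (shuffle_lr M (1/\<sigma>) x))"
proof -
  define s where "s = 1/\<sigma>"
  define Q where "Q j = PiM {..<M} (\<lambda>i. if i = j then gauss s else gauss 0)" for j
  have P1_eq: "P1 M \<sigma> = bind (uniform_count_measure {..<M}) Q"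
    unfolding P1_def Q_def s_def ..
  have sets_Q: "sets (Q j) = sets (P0 M)" for j
    unfolding Q_def P0_def by (rule sets_PiM_cong) auto
  have nonempty: "space (uniform_count_measure {..<M}) \<noteq> {}"
    using assms by (auto simp: space_uniform_count_measure lessThan_empty_iff)
  have Q_meas: "Q \<in> measurable (uniform_count_measure {..<M}) (subprob_algebra (P0 M))"
  proof -
    have "prob_space (Q j)" for j
      unfolding Q_def by (intro prob_space_PiM) (auto simp: prob_space_gauss)
    then have "Q \<in> measurable (count_space {..<M}) (subprob_algebra (P0 M))"
      using sets_Q by (auto simp: space_subprob_algebra prob_space_imp_subprob_space)
    then show ?thesis
      by (simp add: measurable_cong_sets[OF sets_uniform_count_measure_count_space refl])
  qed
  have lr_meas: "(\<lambda>x. ennreal (gauss_lr s (x j))) \<in> borel_measurable (P0 M)" if "j \<in> {..<M}" for j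
    using that unfolding P0_def by measurable
  have sets_P1: "sets (P1 M \<sigma>) = sets (P0 M)"
    unfolding P1_eq using nonempty sets_Q by (subst sets_bind) auto
  show ?thesis
  proof (rule measure_eqI)
    fix X assume "X \<in> sets (P1 M \<sigma>)"
    then have X: "X \<in> sets (P0 M)" using sets_P1 by simp
    have "emeasure (P1 M \<sigma>) X = (\<integral>\<^sup>+j. emeasure (Q j) X \<partial>uniform_count_measure {..<M})"
      unfolding P1_eq using nonempty Q_meas X by (rule emeasure_bind)
    also have "\<dots> = (\<Sum>j<M. ennreal (1 / real M) * emeasure (Q j) X)"
      by (simp add: uniform_count_measure_def nn_integral_point_measure_finite)
    also have "\<dots> = (\<Sum>j<M. ennreal (1 / real M) * (\<integral>\<^sup>+x. ennreal (gauss_lr s (x j)) * indicator X x \<partial>P0 M))"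
      using X lr_meas by (intro sum.cong refl) (simp add: Q_def PiM_shifted_eq_density emeasure_density)
    also have "\<dots> = (\<integral>\<^sup>+x. (\<Sum>j<M. ennreal (1 / real M) * (ennreal (gauss_lr s (x j)) * indicator X x)) \<partial>P0 M)"
      using X lr_meas by (subst nn_integral_sum) (auto simp: nn_integral_cmult)
    also have "\<dots> = (\<integral>\<^sup>+x. ennreal (shuffle_lr M s x) * indicator X x \<partial>P0 M)"
    proof (rule nn_integral_cong)
      fix x
      have "(\<Sum>j<M. ennreal (1 / real M) * ennreal (gauss_lr s (x j))) = ennreal (shuffle_lr M s x)"
        by (simp add: shuffle_lr_def sum_divide_distrib ennreal_mult[symmetric] sum_ennreal
            less_imp_le[OF gauss_lr_pos])
      then show "(\<Sum>j<M. ennreal (1 / real M) * (ennreal (gauss_lr s (x j)) * indicator X x))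
          = ennreal (shuffle_lr M s x) * indicator X x"
        by (cases "x \<in> X") auto
    qed
    also have "\<dots> = emeasure (density (P0 M) (\<lambda>x. ennreal (shuffle_lr M (1/\<sigma>) x))) X"
      using X by (simp add: emeasure_density s_def)
    finally show "emeasure (P1 M \<sigma>) X = emeasure (density (P0 M) (\<lambda>x. ennreal (shuffle_lr M (1/\<sigma>) x))) X" .
  qed (simp add: sets_P1)
qed

lemma P0_gauss_lr_integral:
  assumes "j < M"
  shows "integrable (P0 M) (\<lambda>x. gauss_lr s (x j))" "integral\<^sup>L (P0 M) (\<lambda>x. gauss_lr s (x j)) = 1"
proof -
  interpret prob_space "gauss 0" by (rule prob_space_gauss)
  show "integrable (P0 M) (\<lambda>x. gauss_lr s (x j))" "integral\<^sup>L (P0 M) (\<lambda>x. gauss_lr s (x j)) = 1"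
    using integral_PiM_component_mult[of "\<lambda>_. gauss 0" "{..<M}" j j "gauss_lr s" "\<lambda>_. 1"] assms
    by (simp_all add: P0_def prob_space_gauss gauss_lr_integral)
qed

lemma P0_gauss_lr_mult_integral:
  assumes "j < M" "k < M"
  shows "integrable (P0 M) (\<lambda>x. gauss_lr s (x j) * gauss_lr s (x k))"
    "integral\<^sup>L (P0 M) (\<lambda>x. gauss_lr s (x j) * gauss_lr s (x k)) = (if j = k then exp (s\<^sup>2) else 1)"
  using integral_PiM_component_mult[of "\<lambda>_. gauss 0" "{..<M}" j k "gauss_lr s" "gauss_lr s"] assms
  by (simp_all add: P0_def prob_space_gauss gauss_lr_integral gauss_lr_mult_self_integral)

lemma shuffle_lr_integral:
  assumes "1 \<le> M"
  shows "integrable (P0 M) (shuffle_lr M s)" "integral\<^sup>L (P0 M) (shuffle_lr M s) = 1"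
proof -
  have "integrable (P0 M) (\<lambda>x. \<Sum>j<M. gauss_lr s (x j))"
    by (intro Bochner_Integration.integrable_sum P0_gauss_lr_integral) auto
  moreover have "integral\<^sup>L (P0 M) (\<lambda>x. \<Sum>j<M. gauss_lr s (x j)) = real M"
    by (subst Bochner_Integration.integral_sum) (auto simp: P0_gauss_lr_integral)
  ultimately show "integrable (P0 M) (shuffle_lr M s)" "integral\<^sup>L (P0 M) (shuffle_lr M s) = 1"
    using assms by (simp_all add: shuffle_lr_def[abs_def])
qed

lemma shuffle_lr_sq_integral:
  assumes "1 \<le> M"
  shows "integrable (P0 M) (\<lambda>x. (shuffle_lr M s x)\<^sup>2)"
    "integral\<^sup>L (P0 M) (\<lambda>x. (shuffle_lr M s x)\<^sup>2) = 1 + (exp (s\<^sup>2) - 1) / real M"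
proof -
  have sq: "(\<lambda>x. (shuffle_lr M s x)\<^sup>2) = (\<lambda>x. (\<Sum>j<M. \<Sum>k<M. gauss_lr s (x j) * gauss_lr s (x k)) / (real M)\<^sup>2)"
    by (simp add: shuffle_lr_def power2_eq_square sum_product)
  have sum_int: "integrable (P0 M) (\<lambda>x. \<Sum>j<M. \<Sum>k<M. gauss_lr s (x j) * gauss_lr s (x k))"
    by (intro Bochner_Integration.integrable_sum P0_gauss_lr_mult_integral) auto
  then show "integrable (P0 M) (\<lambda>x. (shuffle_lr M s x)\<^sup>2)"
    unfolding sq by simp
  have "integral\<^sup>L (P0 M) (\<lambda>x. \<Sum>j<M. \<Sum>k<M. gauss_lr s (x j) * gauss_lr s (x k))
      = (\<Sum>j<M. \<Sum>k<M. integral\<^sup>L (P0 M) (\<lambda>x. gauss_lr s (x j) * gauss_lr s (x k)))"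
  proof -
    have "integrable (P0 M) (\<lambda>x. \<Sum>k<M. gauss_lr s (x j) * gauss_lr s (x k))" if "j < M" for j
      using that by (intro Bochner_Integration.integrable_sum P0_gauss_lr_mult_integral) auto
    then show ?thesis
      by (simp add: Bochner_Integration.integral_sum P0_gauss_lr_mult_integral)
  qed
  also have "\<dots> = (\<Sum>j<M. \<Sum>k<M. if j = k then exp (s\<^sup>2) else 1)"
    by (intro sum.cong refl) (simp add: P0_gauss_lr_mult_integral)
  also have "\<dots> = (\<Sum>j<M. \<Sum>k<M. 1 + (if j = k then exp (s\<^sup>2) - 1 else 0))"
    by (intro sum.cong) auto
  also have "\<dots> = real M * (real M + (exp (s\<^sup>2) - 1))"
    by (simp add: sum.distrib algebra_simps)
  finally show "integral\<^sup>L (P0 M) (\<lambda>x. (shuffle_lr M s x)\<^sup>2) = 1 + (exp (s\<^sup>2) - 1) / real M"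
    unfolding sq using assms by (simp add: power2_eq_square field_simps)
qed

lemma shuffle_lr_min_one_integral_ge:
  assumes "1 \<le> M" "0 < \<mu>" "(exp (1/\<sigma>\<^sup>2) - 1) / real M \<le> \<mu>\<^sup>2"
  shows "1 - \<mu> \<le> integral\<^sup>L (P0 M) (\<lambda>x. min (shuffle_lr M (1/\<sigma>) x) 1)"
proof (rule integral_min_one_ge)
  show "integral\<^sup>L (P0 M) (\<lambda>x. (shuffle_lr M (1/\<sigma>) x)\<^sup>2) \<le> 1 + \<mu>\<^sup>2"
    using assms by (simp add: shuffle_lr_sq_integral power_one_over)
qed (use assms in \<open>simp_all add: prob_space_P0 shuffle_lr_integral shuffle_lr_sq_integral\<close>)

lemma shuffle_tradeoff_ge:
  assumes "1 \<le> M" "0 < \<mu>" "(exp (1/\<sigma>\<^sup>2) - 1) / real M \<le> \<mu>\<^sup>2" "0 \<le> a"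
  shows "1 - \<mu> - a \<le> shuffle_tradeoff M \<sigma> a"
proof -
  have "1 - \<mu> - a \<le> integral\<^sup>L (P0 M) (\<lambda>x. min (shuffle_lr M (1/\<sigma>) x) 1) - a"
    using shuffle_lr_min_one_integral_ge[OF assms(1-3)] by simp
  also have "\<dots> \<le> shuffle_tradeoff M \<sigma> a"
    unfolding shuffle_tradeoff_def P1_eq_density[OF \<open>1 \<le> M\<close>] using assms
    by (intro tradeoff_density_ge prob_space_P0 shuffle_lr_integral) (auto simp: shuffle_lr_nonneg)
  finally show ?thesis .
qed

lemma shuffle_tradeoff_comp_ge:
  assumes "1 \<le> M" "0 < \<mu>" "(exp (1/\<sigma>\<^sup>2) - 1) / real M \<le> \<mu>\<^sup>2" "\<mu> \<le> 1" "0 \<le> a"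
  shows "(1 - \<mu>) ^ E - a \<le> shuffle_tradeoff_comp E M \<sigma> a"
proof -
  have "(1 - \<mu>) ^ E \<le> (integral\<^sup>L (P0 M) (\<lambda>x. min (shuffle_lr M (1/\<sigma>) x) 1)) ^ card {..<E}"
    using shuffle_lr_min_one_integral_ge[OF assms(1-3)] \<open>\<mu> \<le> 1\<close> by (auto intro: power_mono)
  also have "\<dots> - a \<le> shuffle_tradeoff_comp E M \<sigma> a"
    unfolding shuffle_tradeoff_comp_def P1_eq_density[OF \<open>1 \<le> M\<close>] using assms
    by (intro tradeoff_PiM_density_ge prob_space_P0 shuffle_lr_integral) (auto simp: shuffle_lr_nonneg)
  finally show ?thesis by simp
qed

section \<open>Berry-Esseen constants are at least 1/8\<close>

definition two_point :: "real \<Rightarrow> real \<Rightarrow> real \<Rightarrow> real measure" where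
  "two_point p u v = distr (measure_pmf (bernoulli_pmf p)) borel (\<lambda>b. if b then u else v)"

lemma space_two_point[simp]: "space (two_point p u v) = UNIV"
  and sets_two_point: "sets (two_point p u v) = sets borel"
  by (simp_all add: two_point_def)

lemma prob_space_two_point: "prob_space (two_point p u v)"
  unfolding two_point_def by (intro prob_space.prob_space_distr prob_space_measure_pmf) simp

lemma integral_two_point:
  fixes f :: "real \<Rightarrow> real"
  assumes "0 \<le> p" "p \<le> 1" "f \<in> borel_measurable borel"
  shows "integrable (two_point p u v) f" "integral\<^sup>L (two_point p u v) f = f u * p + f v * (1 - p)"
proof -
  have meas: "(\<lambda>b. if b then u else v) \<in> measurable (measure_pmf (bernoulli_pmf p)) borel" by simp
  show "integrable (two_point p u v) f"
    unfolding two_point_def integrable_distr_eq[OF meas assms(3)]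
    by (rule integrable_measure_pmf_finite) simp
  show "integral\<^sup>L (two_point p u v) f = f u * p + f v * (1 - p)"
    unfolding two_point_def integral_distr[OF meas assms(3)] using assms by simp
qed

lemma berry_esseen_const_single:
  fixes \<nu> :: "real measure"
  assumes "berry_esseen_const B" "prob_space \<nu>" "sets \<nu> = sets borel"
    and "integrable \<nu> (\<lambda>z. \<bar>z\<bar> ^ 3)" "integral\<^sup>L \<nu> (\<lambda>z. z) = 0" "integral\<^sup>L \<nu> (\<lambda>z. z\<^sup>2) = 2"
  shows "\<bar>measure \<nu> {..0} - Phi 0\<bar> \<le> B * integral\<^sup>L \<nu> (\<lambda>z. \<bar>z\<bar> ^ 3) / (sqrt 2 ^ 3)"
proof -
  let ?P = "PiM {..<1::nat} (\<lambda>_. \<nu>)"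
  have BE: "\<bar>measure ?P {\<omega> \<in> space ?P. (\<Sum>i<1. \<omega> i - 0) / (sqrt 2 * sqrt (real 1)) \<le> 0} - Phi 0\<bar>
      \<le> B * integral\<^sup>L \<nu> (\<lambda>z. \<bar>z\<bar> ^ 3) / (sqrt (real 1) * sqrt 2 ^ 3)"
    using assms(1)[unfolded berry_esseen_const_def, rule_format, of \<nu> 1] assms(2-) by (simp add: Let_def)
  have event: "{\<omega> \<in> space ?P. (\<Sum>i<1. \<omega> i - 0) / (sqrt 2 * sqrt (real 1)) \<le> 0} = (\<lambda>\<omega>. \<omega> 0) -` {..0} \<inter> space ?P"
    by (auto simp: lessThan_Suc divide_le_0_iff)
  have "measure ?P ((\<lambda>\<omega>. \<omega> 0) -` {..0} \<inter> space ?P) = measure (distr ?P \<nu> (\<lambda>\<omega>. \<omega> 0)) {..0}"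
    using assms by (subst measure_distr) (auto intro: measurable_component_singleton)
  also have "\<dots> = measure \<nu> {..0}"
    using assms by (subst distr_PiM_component) auto
  finally show ?thesis using BE event by simp
qed

text \<open>Using both \<open>Z\<close> and \<open>-Z\<close>, where \<open>P(Z = 2) = 1/3\<close> and \<open>P(Z = -1) = 2/3\<close>,
  avoids evaluating \<open>Phi 0\<close>.\<close>
lemma berry_esseen_const_ge: "berry_esseen_const B \<Longrightarrow> 1/8 \<le> B"
proof -
  assume B: "berry_esseen_const B"
  have p: "0 \<le> (1/3::real)" "(1/3::real) \<le> 1" by auto
  note Z = integral_two_point[OF p, where u=2 and v="-1"]
  note Z' = integral_two_point[OF p, where u="-2" and v=1]
  have "\<bar>measure (two_point (1/3) 2 (-1)) {..0} - Phi 0\<bar> \<le> B * (10/3) / (sqrt 2 ^ 3)"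
    using berry_esseen_const_single[OF B prob_space_two_point sets_two_point, of "1/3" 2 "-1"] by (simp add: Z)
  moreover have "\<bar>measure (two_point (1/3) (-2) 1) {..0} - Phi 0\<bar> \<le> B * (10/3) / (sqrt 2 ^ 3)"
    using berry_esseen_const_single[OF B prob_space_two_point sets_two_point, of "1/3" "-2" 1] by (simp add: Z')
  moreover have "measure (two_point (1/3) 2 (-1)) {..0} = 2/3" "measure (two_point (1/3) (-2) 1) {..0} = 1/3"
    using Z(2)[where f="indicator {..0}"] Z'(2)[where f="indicator {..0}"] by simp_all
  ultimately have "1/3 \<le> 2 * (B * (10/3) / (sqrt 2 ^ 3))" by linarith
  then have "sqrt 2 \<le> 10 * B" by (simp add: power3_eq_cube field_simps)
  moreover have "5/4 \<le> sqrt 2" by (rule real_le_rsqrt) (simp add: power2_eq_square)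
  ultimately show "1/8 \<le> B" by simp
qed

section \<open>Numerical bounds\<close>

lemma inverse_mult_one_minus_sq_ge:
  fixes y :: real
  assumes "0 < y" "y < 1"
  shows "4 \<le> 1 / (y * (1 - y)\<^sup>2)" and "8 \<le> sqrt ((1 - y) / y) / (y * (1 - y)\<^sup>2)"
proof -
  define t where "t = y * (1 - y)"
  have t_pos: "0 < t" using assms by (simp add: t_def)
  have t_le: "t \<le> 1/4"
    using assms sum_squares_ge_zero[of "2 * y - 1" 0] by (simp add: t_def power2_eq_square algebra_simps)
  have yt: "y * (1 - y)\<^sup>2 = t * (1 - y)" by (simp add: t_def power2_eq_square)
  also have "\<dots> \<le> t" using t_pos assms by (intro mult_left_le) auto
  also have "\<dots> \<le> 1/4" by (rule t_le)
  finally show "4 \<le> 1 / (y * (1 - y)\<^sup>2)" using assms by (simp add: field_simps)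
  have "((1 - y) / sqrt t)\<^sup>2 = (1 - y)\<^sup>2 / t"
    using t_pos by (simp add: power_divide)
  also have "\<dots> = (1 - y) / y"
    using assms by (simp add: t_def power2_eq_square field_simps)
  finally have sqrt_eq: "sqrt ((1 - y) / y) = (1 - y) / sqrt t"
    using assms t_pos by (metis abs_of_nonneg divide_nonneg_nonneg diff_ge_0_iff_ge less_imp_le
        real_sqrt_abs real_sqrt_ge_zero)
  have "sqrt ((1 - y) / y) / (y * (1 - y)\<^sup>2) = 1 / (t * sqrt t)"
    using assms t_pos by (simp add: sqrt_eq yt)
  moreover have "t * sqrt t \<le> 1/4 * (1/2)"
  proof (intro mult_mono)
    have "sqrt (1/4) = (1/2::real)" by (rule real_sqrt_unique) (simp_all add: power2_eq_square)
    then show "sqrt t \<le> 1/2" using t_le real_sqrt_le_mono by metis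
  qed (use t_pos t_le in auto)
  ultimately show "8 \<le> sqrt ((1 - y) / y) / (y * (1 - y)\<^sup>2)"
    using t_pos by (simp add: field_simps)
qed

definition K_sigma :: "real \<Rightarrow> real" where
  "K_sigma \<sigma> = exp (1/\<sigma>\<^sup>2) * (1 + 4 * exp (-3/\<sigma>\<^sup>2)) / (1 - exp (-1/\<sigma>\<^sup>2))\<^sup>2"

lemma K_sigma_bounds:
  assumes "\<sigma> \<noteq> 0"
  shows "4 \<le> K_sigma \<sigma>" and "8 \<le> K_sigma \<sigma> * sqrt (exp (1/\<sigma>\<^sup>2) - 1)"
proof -
  define y where "y = exp (-1/\<sigma>\<^sup>2)"
  have y: "0 < y" "y < 1" using assms by (simp_all add: y_def)
  have exp_eq: "exp (1/\<sigma>\<^sup>2) = 1 / y" by (simp add: y_def exp_minus field_simps)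
  have "1 / (y * (1 - y)\<^sup>2) = exp (1/\<sigma>\<^sup>2) * 1 / (1 - exp (-1/\<sigma>\<^sup>2))\<^sup>2"
    by (simp add: exp_eq y_def)
  also have "\<dots> \<le> K_sigma \<sigma>"
    unfolding K_sigma_def by (intro divide_right_mono mult_left_mono) auto
  finally have K_ge: "1 / (y * (1 - y)\<^sup>2) \<le> K_sigma \<sigma>" .
  then show "4 \<le> K_sigma \<sigma>" using inverse_mult_one_minus_sq_ge(1)[OF y] by linarith
  have "sqrt ((1 - y) / y) / (y * (1 - y)\<^sup>2) = 1 / (y * (1 - y)\<^sup>2) * sqrt (exp (1/\<sigma>\<^sup>2) - 1)"
    using y by (simp add: exp_eq field_simps)
  also have "\<dots> \<le> K_sigma \<sigma> * sqrt (exp (1/\<sigma>\<^sup>2) - 1)"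
    using K_ge y by (intro mult_right_mono) (auto simp: exp_eq field_simps)
  finally show "8 \<le> K_sigma \<sigma> * sqrt (exp (1/\<sigma>\<^sup>2) - 1)"
    using inverse_mult_one_minus_sq_ge(2)[OF y] by linarith
qed

lemma berry_esseen_K_sigma_ge:
  assumes "berry_esseen_const B" "\<sigma> \<noteq> 0"
  shows "1/2 \<le> B * K_sigma \<sigma>" and "1 \<le> B * K_sigma \<sigma> * sqrt (exp (1/\<sigma>\<^sup>2) - 1)"
proof -
  have B: "1/8 \<le> B" by (rule berry_esseen_const_ge[OF assms(1)])
  show "1/2 \<le> B * K_sigma \<sigma>"
    using mult_mono[OF B K_sigma_bounds(1)[OF assms(2)]] B by simp
  show "1 \<le> B * K_sigma \<sigma> * sqrt (exp (1/\<sigma>\<^sup>2) - 1)"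
    using mult_mono[OF B K_sigma_bounds(2)[OF assms(2)]] B by (simp add: mult.assoc)
qed

lemma tail_term_nonneg:
  assumes "3 \<le> M"
  shows "0 \<le> 4.52 / (2.88 * sqrt (ln (real M)) - 2.41 / sqrt (ln (real M))) * real M powr (-25/24)"
proof -
  have "1 \<le> ln (real M)" using assms exp_le by (simp add: ln_ge_iff)
  then have "0 < sqrt (ln (real M))" by simp
  then have "2.88 * sqrt (ln (real M)) - 2.41 / sqrt (ln (real M)) = (2.88 * ln (real M) - 2.41) / sqrt (ln (real M))"
    by (simp add: field_simps)
  then have "0 < 2.88 * sqrt (ln (real M)) - 2.41 / sqrt (ln (real M))"
    using \<open>1 \<le> ln (real M)\<close> by simp
  then show ?thesis by (intro mult_nonneg_nonneg divide_nonneg_nonneg) auto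
qed

theorem theorem1:
  fixes M :: nat and \<sigma> \<delta> B :: real
  assumes hM: "M \<ge> 2"
    and h\<sigma>: "\<sigma> > 0"
    and hB: "berry_esseen_const B"
    and h\<delta>: "\<delta> > 0"
    and hlow: "let \<mu> = sqrt ((exp (1/\<sigma>\<^sup>2) - 1) / (real M - 1));
                K = exp (1/\<sigma>\<^sup>2) * (1 + 4 * exp (-3/\<sigma>\<^sup>2)) / (1 - exp (-1/\<sigma>\<^sup>2))\<^sup>2
             in \<delta> \<ge> 2 * B * K * \<mu> + \<mu> / sqrt (2*pi)
                  + (1 / (4 * sqrt (2*pi)) + 1 / (2 * sqrt (2 * exp 1 * pi))
                       * (1 + exp (1/\<sigma>\<^sup>2) / (1 - exp (-1/\<sigma>\<^sup>2)))) * \<mu>\<^sup>2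
                  + \<mu> ^ 3 / (4 * sqrt (2 * exp 1 * pi))
                  + \<mu> ^ 4 / (32 * sqrt (2 * exp 1 * pi))
                  + 4.52 / (2.88 * sqrt (ln (real M)) - 2.41 / sqrt (ln (real M)))
                      * real M powr (-25/24)"
    and hup: "let \<mu> = sqrt ((exp (1/\<sigma>\<^sup>2) - 1) / (real M - 1));
                K = exp (1/\<sigma>\<^sup>2) * (1 + 4 * exp (-3/\<sigma>\<^sup>2)) / (1 - exp (-1/\<sigma>\<^sup>2))\<^sup>2
             in \<delta> + B * K * \<mu> \<le> 1/2 - Phi (- (exp (1/\<sigma>\<^sup>2) - 1) / 2)"
  shows "(\<forall>a \<in> {0..1}. shuffle_tradeoff M \<sigma> a \<ge> 1 - a - \<delta>) \<and>
         (\<forall>E::nat. E \<ge> 1 \<longrightarrow>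
            (\<forall>a \<in> {0..1}. shuffle_tradeoff_comp E M \<sigma> a \<ge> (1 - \<delta>) ^ E - a))"
proof -
  define \<mu> where "\<mu> = sqrt ((exp (1/\<sigma>\<^sup>2) - 1) / (real M - 1))"
  note low = hlow[unfolded Let_def, folded \<mu>_def K_sigma_def]
  note up = hup[unfolded Let_def, folded \<mu>_def K_sigma_def]
  have exp_gt_1: "1 < exp (1/\<sigma>\<^sup>2)" using h\<sigma> by simp
  have \<mu>_pos: "0 < \<mu>" using hM exp_gt_1 by (simp add: \<mu>_def)
  have BK: "1/2 \<le> B * K_sigma \<sigma>" using berry_esseen_K_sigma_ge(1) hB h\<sigma> by simp
  have Phi_nonneg: "0 \<le> Phi (- (exp (1/\<sigma>\<^sup>2) - 1) / 2)" by (simp add: Phi_def)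
  have "0 \<le> B * K_sigma \<sigma> * \<mu>" using BK \<mu>_pos by simp
  then have \<delta>_le: "\<delta> \<le> 1/2" using up Phi_nonneg by linarith
  have "3 \<le> M"
  proof (rule ccontr)
    assume "\<not> 3 \<le> M"
    then have "M = 2" using hM by simp
    then have "\<mu> = sqrt (exp (1/\<sigma>\<^sup>2) - 1)" by (simp add: \<mu>_def)
    moreover have "1 \<le> B * K_sigma \<sigma> * sqrt (exp (1/\<sigma>\<^sup>2) - 1)"
      using berry_esseen_K_sigma_ge(2)[OF hB] h\<sigma> by simp
    ultimately show False using up h\<delta> Phi_nonneg by simp
  qed
  have \<mu>_le: "\<mu> \<le> \<delta>"
  proof (rule order_trans[OF _ low], intro add_increasing2)
    show "\<mu> \<le> 2 * B * K_sigma \<sigma> * \<mu>" using BK \<mu>_pos by simp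
  qed (use \<mu>_pos h\<sigma> tail_term_nonneg[OF \<open>3 \<le> M\<close>] in auto)
  have "(exp (1/\<sigma>\<^sup>2) - 1) / real M \<le> (exp (1/\<sigma>\<^sup>2) - 1) / (real M - 1)"
    using exp_gt_1 hM by (intro divide_left_mono) auto
  then have \<chi>: "(exp (1/\<sigma>\<^sup>2) - 1) / real M \<le> \<mu>\<^sup>2" using exp_gt_1 hM by (simp add: \<mu>_def)
  show ?thesis
  proof (intro conjI ballI allI impI)
    fix a :: real assume "a \<in> {0..1}"
    then have "1 - \<mu> - a \<le> shuffle_tradeoff M \<sigma> a"
      using hM \<mu>_pos \<chi> by (intro shuffle_tradeoff_ge) auto
    then show "1 - a - \<delta> \<le> shuffle_tradeoff M \<sigma> a" using \<mu>_le by linarith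
  next
    fix E :: nat and a :: real assume "a \<in> {0..1}"
    then have "(1 - \<mu>) ^ E - a \<le> shuffle_tradeoff_comp E M \<sigma> a"
      using hM \<mu>_pos \<mu>_le \<delta>_le \<chi> by (intro shuffle_tradeoff_comp_ge) auto
    moreover have "(1 - \<delta>) ^ E \<le> (1 - \<mu>) ^ E"
      using \<mu>_le \<delta>_le by (intro power_mono) auto
    ultimately show "(1 - \<delta>) ^ E - a \<le> shuffle_tradeoff_comp E M \<sigma> a" by linarith
  qed
qed

end
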